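(* Let $A\in\mathbb{C}^{m\times m}$ be diagonalizable with spectral decomposition $A=\sum_j a_jP_j$ (distinct eigenvalues, spectral projections $P_iP_j=\delta_{ij}P_i$, $\sum_jP_j=I_m$), and suppose $e^A$ has a period $k$, i.e. $k$ is the smallest positive integer with $(e^A)^k=I_m$. Let $n$ be a positive integer, written $n=kn_q+r$ with quotient $n_q$ and remainder $0\le r<k$. Then, for $B\in\mathbb{C}^{m\times m}$ with $A+B$ diagonalizable, as $B\to0$, $$\left[e^{A+B}\right]^n=e^{\,rA+r\cdot\mathrm{sspc}_A(B)+n\cdot\mathrm{ssp}_A(B)}+O(\|B\|^2).$$
   Context: $\|\cdot\|$ is the Frobenius norm. $\mathrm{ssp}_A(B):=\sum_jP_jBP_j$ and $\mathrm{sspc}_A(B):=\sum_{j\neq k}P_jBP_k$, where $P_j$ are the spectral projections of $A$. "$=\ldots+O(\|B\|^2)$" means there exist $c,\delta>0$ (depending on $A$ and $n$) such that the norm of the difference is at most $c\|B\|^2$ whenever $\|B\|\le\delta$ and $A+B$ is diagonalizable. *)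

theory Defs
  imports "HOL-Analysis.Analysis"
begin

text \<open>Complex m x m matrices are represented as complex^'m^'m (HOL-Analysis);
  the product is matrix multiplication (**), the identity is mat 1, and the
  library norm on this type is the Frobenius norm.\<close>

primrec mpow :: "complex^'m^'m \<Rightarrow> nat \<Rightarrow> complex^'m^'m" where
  "mpow M 0 = mat 1"
| "mpow M (Suc k) = M ** mpow M k"

definition mexp :: "complex^'m^'m \<Rightarrow> complex^'m^'m" where
  "mexp M = (\<Sum>k. (1 / fact k) *\<^sub>R mpow M k)"

definition csmult :: "complex \<Rightarrow> complex^'m^'m \<Rightarrow> complex^'m^'m" where
  "csmult c M = (\<chi> i j. c * M $ i $ j)"

definition diagonal_mat :: "complex^'m^'m \<Rightarrow> bool" where
  "diagonal_mat D \<longleftrightarrow> (\<forall>i j. i \<noteq> j \<longrightarrow> D $ i $ j = 0)"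

definition diagonalizable :: "complex^'m^'m \<Rightarrow> bool" where
  "diagonalizable M \<longleftrightarrow>
     (\<exists>(S::complex^'m^'m) (D::complex^'m^'m). invertible S \<and> diagonal_mat D \<and> M = S ** D ** matrix_inv S)"

text \<open>ssp and sspc relative to a spectral decomposition given by the finite set of
  distinct eigenvalues E and spectral projections P.\<close>
definition ssp :: "complex set \<Rightarrow> (complex \<Rightarrow> complex^'m^'m) \<Rightarrow> complex^'m^'m \<Rightarrow> complex^'m^'m" where
  "ssp E P B = (\<Sum>j\<in>E. P j ** B ** P j)"

definition sspc :: "complex set \<Rightarrow> (complex \<Rightarrow> complex^'m^'m) \<Rightarrow> complex^'m^'m \<Rightarrow> complex^'m^'m" where
  "sspc E P B = (\<Sum>(j,l)\<in>{(j,l). j \<in> E \<and> l \<in> E \<and> j \<noteq> l}. P j ** B ** P l)"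

end

(*
  Write U = e^A and r = n mod k. As e^A is a function of A, U^k = 1 forces e^{ka} = 1 for every
  eigenvalue a, so U^n = e^{rA}. To first order in B, e^{A+B} = U + D(B) with D the derivative of exp at A,
  hence (e^{A+B})^n = U^n + Lin(B) + O(|B|^2) with Lin(B) = sum_{i<n} U^i D(B) U^{n-1-i};
  likewise e^{rA + C(B)} = e^{rA} + D_r(C(B)) + O(|B|^2) for the linear map
  C(B) = r sspc(B) + n ssp(B), where D_r is the derivative of exp at rA. On the block P_j (.) P_l,
  D multiplies by the divided difference of exp at (a_j, a_l) and the sum over i by that of
  z^n at (e^{a_j}, e^{a_l}); using e^{n a} = e^{r a}, their product is the divided difference
  of exp at (r a_j, r a_l) times n (if j = l) or r (if j <> l), which is exactly how D_r o C
  acts on that block. So Lin = D_r o C and the two sides differ by O(|B|^2).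
*)

theory Submission
  imports Defs
begin

type_synonym 'm cmat = "complex^'m^'m"

section \<open>Big-O near zero\<close>

definition bigo_norm_pow :: "('a::real_normed_vector \<Rightarrow> 'b::real_normed_vector) \<Rightarrow> nat \<Rightarrow> bool" where
  "bigo_norm_pow F p \<longleftrightarrow> (\<exists>c. \<forall>\<^sub>F x in nhds 0. norm (F x) \<le> c * norm x ^ p)"

lemma eventually_norm_le_1_nhds_0: "\<forall>\<^sub>F x in nhds 0. norm (x::'a::real_normed_vector) \<le> 1"
  by (auto simp: eventually_nhds_metric_le intro!: exI[of _ 1])

lemma bigo_norm_pow_id: "bigo_norm_pow (\<lambda>x. x) 1"
  by (auto simp: bigo_norm_pow_def intro!: exI[of _ 1])

lemma bigo_norm_pow_add:
  assumes "bigo_norm_pow F p" "bigo_norm_pow G p"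
  shows "bigo_norm_pow (\<lambda>x. F x + G x) p"
proof -
  obtain c d where "\<forall>\<^sub>F x in nhds 0. norm (F x) \<le> c * norm x ^ p"
    and "\<forall>\<^sub>F x in nhds 0. norm (G x) \<le> d * norm x ^ p"
    using assms by (auto simp: bigo_norm_pow_def)
  then have "\<forall>\<^sub>F x in nhds 0. norm (F x + G x) \<le> (c + d) * norm x ^ p"
    by eventually_elim (auto simp: distrib_right intro: order_trans[OF norm_triangle_ineq])
  then show ?thesis by (auto simp: bigo_norm_pow_def)
qed

lemma bigo_norm_pow_diff:
  assumes "bigo_norm_pow F p" "bigo_norm_pow G p"
  shows "bigo_norm_pow (\<lambda>x. F x - G x) p"
proof -
  obtain c d where "\<forall>\<^sub>F x in nhds 0. norm (F x) \<le> c * norm x ^ p"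
    and "\<forall>\<^sub>F x in nhds 0. norm (G x) \<le> d * norm x ^ p"
    using assms by (auto simp: bigo_norm_pow_def)
  then have "\<forall>\<^sub>F x in nhds 0. norm (F x - G x) \<le> (c + d) * norm x ^ p"
    by eventually_elim (auto simp: distrib_right intro: order_trans[OF norm_triangle_ineq4])
  then show ?thesis by (auto simp: bigo_norm_pow_def)
qed

lemma bigo_norm_pow_le_power:
  assumes F: "bigo_norm_pow F p" and G: "\<forall>\<^sub>F x in nhds 0. norm (G x) \<le> K * norm (F x) ^ q"
  shows "bigo_norm_pow G (p * q)"
proof -
  obtain c where "\<forall>\<^sub>F x in nhds 0. norm (F x) \<le> c * norm x ^ p"
    using F by (auto simp: bigo_norm_pow_def)
  with G have "\<forall>\<^sub>F x in nhds 0. norm (G x) \<le> (\<bar>K\<bar> * c ^ q) * norm x ^ (p * q)"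
  proof eventually_elim
    case (elim x)
    have "norm (G x) \<le> \<bar>K\<bar> * norm (F x) ^ q"
      using elim(1) by (rule order_trans) (simp add: mult_right_mono)
    also have "\<dots> \<le> \<bar>K\<bar> * (c * norm x ^ p) ^ q"
      using elim(2) by (intro mult_left_mono power_mono) auto
    finally show ?case by (simp add: power_mult_distrib power_mult)
  qed
  then show ?thesis by (auto simp: bigo_norm_pow_def)
qed

lemma bigo_norm_pow_le:
  "bigo_norm_pow F p \<Longrightarrow> \<forall>\<^sub>F x in nhds 0. norm (G x) \<le> K * norm (F x) \<Longrightarrow> bigo_norm_pow G p"
  using bigo_norm_pow_le_power[where q = 1] by simp

lemma bigo_norm_pow_mono:
  assumes "bigo_norm_pow F q" "p \<le> q"
  shows "bigo_norm_pow F p"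
proof -
  obtain c where "\<forall>\<^sub>F x in nhds 0. norm (F x) \<le> c * norm x ^ q"
    using assms by (auto simp: bigo_norm_pow_def)
  with eventually_norm_le_1_nhds_0
  have "\<forall>\<^sub>F x in nhds 0. norm (F x) \<le> \<bar>c\<bar> * norm x ^ p"
  proof eventually_elim
    case (elim x)
    have "c * norm x ^ q \<le> \<bar>c\<bar> * norm x ^ q" by (simp add: mult_right_mono)
    also have "\<dots> \<le> \<bar>c\<bar> * norm x ^ p"
      using elim(1) \<open>p \<le> q\<close> by (intro mult_left_mono power_decreasing) auto
    finally show ?case using elim(2) by linarith
  qed
  then show ?thesis by (auto simp: bigo_norm_pow_def)
qed

lemma bigo_norm_pow_imp_eventually_bounded:
  assumes "bigo_norm_pow F p"
  obtains K where "\<forall>\<^sub>F x in nhds 0. norm (F x) \<le> K"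
proof -
  have "bigo_norm_pow F 0" using assms by (rule bigo_norm_pow_mono) simp
  then show ?thesis using that by (auto simp: bigo_norm_pow_def)
qed

lemma bigo_norm_pow_imp_bound:
  assumes "bigo_norm_pow F p"
  shows "\<exists>c \<delta>. c > 0 \<and> \<delta> > 0 \<and> (\<forall>x. norm x \<le> \<delta> \<longrightarrow> norm (F x) \<le> c * norm x ^ p)"
proof -
  obtain c \<delta> where "\<delta> > 0" and bound: "\<And>x. norm x \<le> \<delta> \<Longrightarrow> norm (F x) \<le> c * norm x ^ p"
    using assms by (auto simp: bigo_norm_pow_def eventually_nhds_metric_le dist_norm)
  have "norm (F x) \<le> (\<bar>c\<bar> + 1) * norm x ^ p" if "norm x \<le> \<delta>" for x
    using bound[OF that] by (rule order_trans) (simp add: mult_right_mono)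
  then show ?thesis using \<open>\<delta> > 0\<close> by (intro exI[of _ "\<bar>c\<bar> + 1"] exI[of _ \<delta>]) auto
qed

section \<open>Matrix algebra and the Frobenius norm\<close>

lemma matrix_add_rdistrib: "((A::'a::semiring_1^'n^'m) + B) ** C = A ** C + B ** C"
  by (vector matrix_matrix_mult_def sum.distrib[symmetric] field_simps)

lemma matrix_sum_left: "(sum f S :: 'a::semiring_1^'n^'m) ** C = (\<Sum>s\<in>S. f s ** C)"
  by (induction S rule: infinite_finite_induct) (auto simp: matrix_add_rdistrib)

lemma matrix_sum_right: "(C :: 'a::semiring_1^'n^'m) ** sum f S = (\<Sum>s\<in>S. C ** f s)"
  by (induction S rule: infinite_finite_induct) (auto simp: matrix_add_ldistrib)

lemma csmult_mult_left: "csmult c M ** N = csmult c (M ** N)"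
  by (vector csmult_def matrix_matrix_mult_def sum_distrib_left mult.assoc)

lemma csmult_mult_right: "M ** csmult c N = csmult c (M ** N)"
  by (vector csmult_def matrix_matrix_mult_def sum_distrib_left mult.assoc mult.left_commute)

lemma csmult_add_right: "csmult c (M + N) = csmult c M + csmult c N"
  by (vector csmult_def distrib_left)

lemma csmult_add_left: "csmult (c + d) M = csmult c M + csmult d M"
  by (vector csmult_def distrib_right)

lemma csmult_diff_left: "csmult (c - d) M = csmult c M - csmult d M"
  by (vector csmult_def left_diff_distrib)

lemma csmult_csmult: "csmult c (csmult d M) = csmult (c * d) M"
  by (vector csmult_def mult.assoc)

lemma csmult_0_left [simp]: "csmult 0 M = 0"
  by (vector csmult_def)

lemma csmult_0_right [simp]: "csmult c 0 = 0"
  by (vector csmult_def)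

lemma csmult_1 [simp]: "csmult 1 M = M"
  by (vector csmult_def)

lemma csmult_sum_right: "csmult c (sum f S) = (\<Sum>s\<in>S. csmult c (f s))"
  by (induction S rule: infinite_finite_induct) (auto simp: csmult_add_right)

lemma scaleR_csmult: "r *\<^sub>R csmult c M = csmult (of_real r * c) M"
  by (vector csmult_def scaleR_conv_of_real mult.assoc)

lemma norm_matrix_sq: "(norm (M::complex^'n^'m))\<^sup>2 = (\<Sum>i\<in>UNIV. \<Sum>j\<in>UNIV. (cmod (M$i$j))\<^sup>2)"
  by (simp add: norm_vec_def L2_set_def sum_nonneg)

lemma norm_csmult: "norm (csmult c (M::'m::finite cmat)) = cmod c * norm M"
proof -
  have "(norm (csmult c M))\<^sup>2 = (cmod c * norm M)\<^sup>2"
    by (simp add: norm_matrix_sq csmult_def power_mult_distrib norm_mult sum_distrib_left)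
  then show ?thesis by (simp add: power2_eq_iff_nonneg)
qed

lemma bounded_linear_csmult_left: "bounded_linear (\<lambda>c. csmult c (M::'m::finite cmat))"
proof
  show "csmult (r *\<^sub>R c) M = r *\<^sub>R csmult c M" for r c
    by (subst scaleR_csmult) (simp add: scaleR_conv_of_real)
  show "\<exists>K. \<forall>c. norm (csmult c M) \<le> norm c * K"
    by (auto simp: norm_csmult)
qed (rule csmult_add_left)

lemma cmod_sum_mult_sq_le:
  "(cmod (\<Sum>k\<in>UNIV. a k * b k))\<^sup>2 \<le> (\<Sum>k\<in>UNIV. (cmod (a k))\<^sup>2) * (\<Sum>k\<in>UNIV. (cmod (b k))\<^sup>2)"
proof -
  have "cmod (\<Sum>k\<in>UNIV. a k * b k) \<le> (\<Sum>k\<in>UNIV. \<bar>cmod (a k)\<bar> * \<bar>cmod (b k)\<bar>)"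
    by (rule order_trans[OF norm_sum]) (simp add: norm_mult)
  also have "\<dots> \<le> L2_set (\<lambda>k. cmod (a k)) UNIV * L2_set (\<lambda>k. cmod (b k)) UNIV"
    by (rule L2_set_mult_ineq)
  finally show ?thesis
    by (auto simp: L2_set_def power_mult_distrib sum_nonneg intro: order_trans[OF power_mono])
qed

lemma norm_matrix_mult_le: "norm ((M::complex^'n^'m) ** (N::complex^'p^'n)) \<le> norm M * norm N"
proof -
  have "(norm (M ** N))\<^sup>2 = (\<Sum>i\<in>UNIV. \<Sum>j\<in>UNIV. (cmod (\<Sum>k\<in>UNIV. M$i$k * N$k$j))\<^sup>2)"
    by (simp add: norm_matrix_sq matrix_matrix_mult_def)
  also have "\<dots> \<le> (\<Sum>i\<in>UNIV. \<Sum>j\<in>UNIV. (\<Sum>k\<in>UNIV. (cmod (M$i$k))\<^sup>2) * (\<Sum>k\<in>UNIV. (cmod (N$k$j))\<^sup>2))"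
    by (intro sum_mono cmod_sum_mult_sq_le)
  also have "\<dots> = (\<Sum>i\<in>UNIV. \<Sum>k\<in>UNIV. (cmod (M$i$k))\<^sup>2) * (\<Sum>j\<in>UNIV. \<Sum>k\<in>UNIV. (cmod (N$k$j))\<^sup>2)"
    by (simp add: sum_product)
  also have "\<dots> = (norm M * norm N)\<^sup>2"
    by (subst sum.swap) (simp add: norm_matrix_sq power_mult_distrib)
  finally show ?thesis by (rule power2_le_imp_le) simp
qed

lemma norm_sandwich_le: "norm ((P::complex^'n^'m) ** B ** Q) \<le> norm P * norm Q * norm B"
proof -
  have "norm (P ** B ** Q) \<le> norm (P ** B) * norm Q" by (rule norm_matrix_mult_le)
  also have "\<dots> \<le> norm P * norm B * norm Q" by (intro mult_right_mono norm_matrix_mult_le) auto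
  finally show ?thesis by (simp add: ac_simps)
qed

lemma sandwich_scaleR: "(P::complex^'n^'m) ** (r *\<^sub>R B) ** Q = r *\<^sub>R (P ** B ** Q)"
  by (simp add: matrix_scalar_ac scalar_matrix_assoc)

lemma bounded_linear_sandwich: "bounded_linear (\<lambda>B. (P::complex^'n^'m) ** B ** Q)"
proof
  show "P ** (B + C) ** Q = P ** B ** Q + P ** C ** Q" for B C
    by (simp add: matrix_add_ldistrib matrix_add_rdistrib)
  show "P ** (r *\<^sub>R B) ** Q = r *\<^sub>R (P ** B ** Q)" for r B
    by (rule sandwich_scaleR)
  show "\<exists>K. \<forall>B. norm (P ** B ** Q) \<le> norm B * K"
    using norm_sandwich_le by (metis mult.commute)
qed

lemma norm_mpow_le: "norm (mpow (M::'m::finite cmat) k) \<le> norm (mat 1 :: 'm cmat) * norm M ^ k"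
proof (induction k)
  case (Suc k)
  have "norm (mpow M (Suc k)) \<le> norm M * norm (mpow M k)" by (simp add: norm_matrix_mult_le)
  also have "\<dots> \<le> norm M * (norm (mat 1 :: 'm cmat) * norm M ^ k)" by (intro mult_left_mono Suc) auto
  finally show ?case by (simp add: ac_simps)
qed simp

section \<open>First-order expansions of matrix powers and the exponential\<close>

text \<open>\<open>mpow_deriv X Y n\<close> is \<open>\<Sum>i<n. X^i Y X^(n-1-i)\<close>, the derivative of \<open>X \<mapsto> X^n\<close> in direction \<open>Y\<close>.\<close>

primrec mpow_deriv :: "'m::finite cmat \<Rightarrow> 'm cmat \<Rightarrow> nat \<Rightarrow> 'm cmat" where
  "mpow_deriv X Y 0 = 0"
| "mpow_deriv X Y (Suc n) = X ** mpow_deriv X Y n + Y ** mpow X n"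

lemma mpow_deriv_add: "mpow_deriv X (Y + Z) n = mpow_deriv X Y n + mpow_deriv X Z n"
  by (induction n) (simp_all add: matrix_add_ldistrib matrix_add_rdistrib algebra_simps)

lemma norm_mpow_deriv_le:
  "norm (mpow_deriv (X::'m::finite cmat) Y k) \<le> norm (mat 1 :: 'm cmat) * norm Y * (2 * (norm X + 1)) ^ k"
proof (induction k)
  case (Suc k)
  let ?c = "norm (mat 1 :: 'm cmat)" and ?t = "2 * (norm X + 1)"
  have "norm X ^ k \<le> ?t ^ k" by (intro power_mono) auto
  then have "?c * norm X ^ k \<le> ?c * ?t ^ k" by (rule mult_left_mono) simp
  then have "norm (mpow X k) \<le> ?c * ?t ^ k" using norm_mpow_le[of X k] by linarith
  also have "\<dots> \<le> (norm X + 1) * (?c * ?t ^ k)" by (simp add: distrib_right)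
  finally have mpow_le: "norm (mpow X k) \<le> (norm X + 1) * (?c * ?t ^ k)" .
  have "norm (mpow_deriv X Y (Suc k)) \<le> norm X * norm (mpow_deriv X Y k) + norm Y * norm (mpow X k)"
    unfolding mpow_deriv.simps
    by (rule order_trans[OF norm_triangle_ineq add_mono[OF norm_matrix_mult_le norm_matrix_mult_le]])
  also have "\<dots> \<le> (norm X + 1) * (?c * norm Y * ?t ^ k) + norm Y * ((norm X + 1) * (?c * ?t ^ k))"
    using Suc.IH mpow_le by (intro add_mono mult_mono) auto
  also have "\<dots> = ?c * norm Y * ?t ^ Suc k" by (simp add: algebra_simps)
  finally show ?case .
qed simp

lemma norm_mpow_remainder_le:
  "norm (mpow ((X::'m::finite cmat) + Y) k - mpow X k - mpow_deriv X Y k)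
     \<le> norm (mat 1 :: 'm cmat) * (norm Y)\<^sup>2 * (4 * (norm X + norm Y + 1)) ^ k"
proof (induction k)
  case (Suc k)
  let ?c = "norm (mat 1 :: 'm cmat)" and ?t = "norm X + norm Y + 1"
  define L where "L = mpow_deriv X Y k"
  define R where "R = mpow (X + Y) k - mpow X k - L"
  have "mpow (X + Y) k = mpow X k + L + R" by (simp add: R_def)
  then have eq: "mpow (X + Y) (Suc k) - mpow X (Suc k) - mpow_deriv X Y (Suc k) = Y ** L + (X + Y) ** R"
    by (simp add: L_def matrix_add_ldistrib matrix_add_rdistrib)
  have "norm (X + Y) \<le> ?t" using norm_triangle_ineq[of X Y] by linarith
  then have "norm ((X + Y) ** R) \<le> ?t * norm R"
    by (rule order_trans[OF norm_matrix_mult_le mult_right_mono]) simp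
  then have "norm (mpow (X + Y) (Suc k) - mpow X (Suc k) - mpow_deriv X Y (Suc k))
      \<le> norm Y * norm L + ?t * norm R"
    unfolding eq using norm_triangle_ineq[of "Y ** L" "(X + Y) ** R"] norm_matrix_mult_le[of Y L] by linarith
  also have "\<dots> \<le> norm Y * (?c * norm Y * (4 * ?t) ^ k) + ?t * (?c * (norm Y)\<^sup>2 * (4 * ?t) ^ k)"
  proof (intro add_mono mult_left_mono)
    have "(2 * (norm X + 1)) ^ k \<le> (4 * ?t) ^ k" by (intro power_mono) auto
    then show "norm L \<le> ?c * norm Y * (4 * ?t) ^ k"
      unfolding L_def by (rule order_trans[OF norm_mpow_deriv_le mult_left_mono]) auto
  qed (use Suc.IH R_def L_def in auto)
  also have "\<dots> = ?c * (norm Y)\<^sup>2 * ((4 * ?t) ^ k * (1 + ?t))" by (simp add: algebra_simps power2_eq_square)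
  also have "\<dots> \<le> ?c * (norm Y)\<^sup>2 * ((4 * ?t) ^ k * (4 * ?t))" by (intro mult_left_mono) auto
  also have "\<dots> = ?c * (norm Y)\<^sup>2 * (4 * ?t) ^ Suc k" by (simp only: power_Suc2)
  finally show ?case .
qed simp

lemma fact_series_bound:
  fixes f :: "nat \<Rightarrow> 'a::banach"
  assumes "\<And>k. norm (f k) \<le> C * z ^ k"
  shows "summable (\<lambda>k. (1 / fact k) *\<^sub>R f k)" and "norm (\<Sum>k. (1 / fact k) *\<^sub>R f k) \<le> C * exp z"
proof -
  have term_le: "norm ((1 / fact k) *\<^sub>R f k) \<le> C * (z ^ k / fact k)" for k
    using assms[of k] by (simp add: divide_right_mono)
  have "(\<lambda>k. C * (z ^ k / fact k)) sums (C * exp z)"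
    using exp_converges[of z] by (intro sums_mult) (simp add: divide_inverse_commute)
  then have summable: "summable (\<lambda>k. C * (z ^ k / fact k))" and "(\<Sum>k. C * (z ^ k / fact k)) = C * exp z"
    by (simp_all add: sums_iff)
  show "summable (\<lambda>k. (1 / fact k) *\<^sub>R f k)"
    by (rule summable_comparison_test'[OF summable term_le])
  show "norm (\<Sum>k. (1 / fact k) *\<^sub>R f k) \<le> C * exp z"
    using norm_suminf_le[OF term_le summable] \<open>(\<Sum>k. _) = C * exp z\<close> by simp
qed

lemma mexp_sums: "(\<lambda>k. (1 / fact k) *\<^sub>R mpow M k) sums mexp (M::'m::finite cmat)"
  unfolding mexp_def by (rule summable_sums[OF fact_series_bound(1)[OF norm_mpow_le]])

definition mexp_deriv :: "'m::finite cmat \<Rightarrow> 'm cmat \<Rightarrow> 'm cmat" where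
  "mexp_deriv X Y = (\<Sum>k. (1 / fact k) *\<^sub>R mpow_deriv X Y k)"

lemma mexp_deriv_sums: "(\<lambda>k. (1 / fact k) *\<^sub>R mpow_deriv X Y k) sums mexp_deriv X Y"
  unfolding mexp_deriv_def by (rule summable_sums[OF fact_series_bound(1)[OF norm_mpow_deriv_le]])

lemma norm_mexp_deriv_le:
  "norm (mexp_deriv (X::'m::finite cmat) Y) \<le> norm (mat 1 :: 'm cmat) * norm Y * exp (2 * (norm X + 1))"
  using fact_series_bound(2)[OF norm_mpow_deriv_le] by (simp add: mexp_deriv_def)

lemma norm_mexp_remainder_le:
  "norm (mexp ((X::'m::finite cmat) + Y) - mexp X - mexp_deriv X Y)
     \<le> norm (mat 1 :: 'm cmat) * (norm Y)\<^sup>2 * exp (4 * (norm X + norm Y + 1))"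
proof -
  have "(\<lambda>k. (1 / fact k) *\<^sub>R mpow (X + Y) k - (1 / fact k) *\<^sub>R mpow X k
      - (1 / fact k) *\<^sub>R mpow_deriv X Y k) sums (mexp (X + Y) - mexp X - mexp_deriv X Y)"
    by (intro sums_diff mexp_sums mexp_deriv_sums)
  then have series: "mexp (X + Y) - mexp X - mexp_deriv X Y
      = (\<Sum>k. (1 / fact k) *\<^sub>R (mpow (X + Y) k - mpow X k - mpow_deriv X Y k))"
    by (simp only: scaleR_diff_right sums_unique)
  show ?thesis
    unfolding series by (rule fact_series_bound(2)[OF norm_mpow_remainder_le])
qed

lemma bigo_mpow_deriv:
  fixes X :: "'m::finite cmat"
  assumes "bigo_norm_pow Y p"
  shows "bigo_norm_pow (\<lambda>x. mpow_deriv X (Y x) n) p"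
proof -
  have "norm (mpow_deriv X (Y x) n) \<le> (norm (mat 1 :: 'm cmat) * (2 * (norm X + 1)) ^ n) * norm (Y x)" for x
    using norm_mpow_deriv_le[of X "Y x" n] by (simp add: mult_ac)
  then show ?thesis by (intro bigo_norm_pow_le[OF assms] always_eventually allI)
qed

lemma bigo_mexp_deriv:
  fixes X :: "'m::finite cmat"
  assumes "bigo_norm_pow Y p"
  shows "bigo_norm_pow (\<lambda>x. mexp_deriv X (Y x)) p"
proof -
  have "norm (mexp_deriv X (Y x)) \<le> (norm (mat 1 :: 'm cmat) * exp (2 * (norm X + 1))) * norm (Y x)" for x
    using norm_mexp_deriv_le[of X "Y x"] by (simp add: mult_ac)
  then show ?thesis by (intro bigo_norm_pow_le[OF assms] always_eventually allI)
qed

lemma bigo_csmult: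
  fixes F :: "'a::real_normed_vector \<Rightarrow> 'm::finite cmat"
  assumes "bigo_norm_pow F p"
  shows "bigo_norm_pow (\<lambda>x. csmult c (F x)) p"
  by (intro bigo_norm_pow_le[OF assms, where K = "cmod c"] always_eventually allI) (simp add: norm_csmult)

lemma bigo_mpow_remainder:
  fixes X :: "'m::finite cmat"
  assumes "bigo_norm_pow Y 1"
  shows "bigo_norm_pow (\<lambda>x. mpow (X + Y x) n - mpow X n - mpow_deriv X (Y x) n) 2"
proof -
  obtain K where "\<forall>\<^sub>F x in nhds 0. norm (Y x) \<le> K"
    using assms by (rule bigo_norm_pow_imp_eventually_bounded)
  then have "\<forall>\<^sub>F x in nhds 0. norm (mpow (X + Y x) n - mpow X n - mpow_deriv X (Y x) n)
      \<le> (norm (mat 1 :: 'm cmat) * (4 * (norm X + K + 1)) ^ n) * norm (Y x) ^ 2"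
  proof eventually_elim
    case (elim x)
    have "(4 * (norm X + norm (Y x) + 1)) ^ n \<le> (4 * (norm X + K + 1)) ^ n"
      using elim by (intro power_mono) auto
    from order_trans[OF norm_mpow_remainder_le mult_left_mono[OF this]]
    show ?case by (simp add: mult_ac)
  qed
  then show ?thesis using bigo_norm_pow_le_power[OF assms, where q = 2] by simp
qed

lemma bigo_mexp_remainder:
  fixes X :: "'m::finite cmat"
  assumes "bigo_norm_pow Y 1"
  shows "bigo_norm_pow (\<lambda>x. mexp (X + Y x) - mexp X - mexp_deriv X (Y x)) 2"
proof -
  obtain K where "\<forall>\<^sub>F x in nhds 0. norm (Y x) \<le> K"
    using assms by (rule bigo_norm_pow_imp_eventually_bounded)
  then have "\<forall>\<^sub>F x in nhds 0. norm (mexp (X + Y x) - mexp X - mexp_deriv X (Y x))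
      \<le> (norm (mat 1 :: 'm cmat) * exp (4 * (norm X + K + 1))) * norm (Y x) ^ 2"
  proof eventually_elim
    case (elim x)
    have "exp (4 * (norm X + norm (Y x) + 1)) \<le> exp (4 * (norm X + K + 1))"
      using elim by simp
    from order_trans[OF norm_mexp_remainder_le mult_left_mono[OF this]]
    show ?case by (simp add: mult_ac)
  qed
  then show ?thesis using bigo_norm_pow_le_power[OF assms, where q = 2] by simp
qed

lemma bigo_mpow_mexp_remainder:
  fixes A :: "'m::finite cmat"
  shows "bigo_norm_pow
    (\<lambda>B. mpow (mexp (A + B)) n - mpow (mexp A) n - mpow_deriv (mexp A) (mexp_deriv A B) n) 2"
proof -
  define R where "R B = mexp (A + B) - mexp A - mexp_deriv A B" for B
  have R: "bigo_norm_pow R 2"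
    unfolding R_def using bigo_mexp_remainder[OF bigo_norm_pow_id] .
  have W: "bigo_norm_pow (\<lambda>B. mexp_deriv A B + R B) 1"
    using bigo_mexp_deriv[OF bigo_norm_pow_id] bigo_norm_pow_mono[OF R] by (intro bigo_norm_pow_add) auto
  have "bigo_norm_pow (\<lambda>B. mpow_deriv (mexp A) (R B) n + (mpow (mexp A + (mexp_deriv A B + R B)) n
      - mpow (mexp A) n - mpow_deriv (mexp A) (mexp_deriv A B + R B) n)) 2"
    by (intro bigo_norm_pow_add bigo_mpow_deriv R bigo_mpow_remainder W)
  moreover have "mpow_deriv (mexp A) (R B) n + (mpow (mexp A + (mexp_deriv A B + R B)) n
      - mpow (mexp A) n - mpow_deriv (mexp A) (mexp_deriv A B + R B) n)
    = mpow (mexp (A + B)) n - mpow (mexp A) n - mpow_deriv (mexp A) (mexp_deriv A B) n" for B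
  proof -
    have "mexp A + (mexp_deriv A B + R B) = mexp (A + B)" by (simp add: R_def)
    then show ?thesis by (simp only: mpow_deriv_add) (simp add: algebra_simps)
  qed
  ultimately show ?thesis by simp
qed

section \<open>Divided differences\<close>

primrec pow_divdiff :: "'a::comm_ring_1 \<Rightarrow> 'a \<Rightarrow> nat \<Rightarrow> 'a" where
  "pow_divdiff a b 0 = 0"
| "pow_divdiff a b (Suc n) = a * pow_divdiff a b n + b ^ n"

lemma pow_divdiff_mult: "(a - b) * pow_divdiff a b n = a ^ n - b ^ n"
proof (induction n)
  case (Suc n)
  have "(a - b) * pow_divdiff a b (Suc n) = a * ((a - b) * pow_divdiff a b n) + (a - b) * b ^ n"
    by (simp add: algebra_simps)
  also have "\<dots> = a ^ Suc n - b ^ Suc n" by (simp only: Suc) (simp add: algebra_simps)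
  finally show ?case .
qed simp

lemma pow_divdiff_same: "pow_divdiff a a (Suc n) = of_nat (Suc n) * a ^ n"
  by (induction n) (simp_all add: algebra_simps)

definition exp_divdiff :: "complex \<Rightarrow> complex \<Rightarrow> complex" where
  "exp_divdiff a b = (if a = b then exp a else (exp a - exp b) / (a - b))"

lemma exp_sums_complex: "(\<lambda>k. of_real (1 / fact k) * z ^ k) sums exp (z::complex)"
  using exp_converges[of z] by (simp add: scaleR_conv_of_real mult.commute divide_inverse)

lemma pow_divdiff_sums: "(\<lambda>k. of_real (1 / fact k) * pow_divdiff a b k) sums exp_divdiff a b"
proof (cases "a = b")
  case True
  have "of_real (1 / fact (Suc k)) * pow_divdiff a a (Suc k) = of_real (1 / fact k) * a ^ k" for k
  proof -
    have "(1 / fact (Suc k)) * of_nat (Suc k) = (1 / fact k :: real)"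
      by (simp add: field_simps del: of_nat_Suc)
    then have "of_real (1 / fact (Suc k)) * (of_nat (Suc k) :: complex) = of_real (1 / fact k)"
      by (metis of_real_mult of_real_of_nat_eq)
    then show ?thesis by (simp only: pow_divdiff_same mult.assoc[symmetric])
  qed
  then have "(\<lambda>k. of_real (1 / fact (Suc k)) * pow_divdiff a a (Suc k)) sums exp a"
    using exp_sums_complex by simp
  then have "(\<lambda>k. of_real (1 / fact k) * pow_divdiff a a k) sums (exp a + of_real (1 / fact 0) * pow_divdiff a a 0)"
    by (rule sums_Suc[where f = "\<lambda>k. of_real (1 / fact k) * pow_divdiff a a k"])
  then show ?thesis
    using True by (simp add: exp_divdiff_def)
next
  case False
  have "(\<lambda>k. (of_real (1 / fact k) * a ^ k - of_real (1 / fact k) * b ^ k) / (a - b))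
      sums ((exp a - exp b) / (a - b))"
    by (intro sums_divide sums_diff exp_sums_complex)
  moreover have "pow_divdiff a b k = (a ^ k - b ^ k) / (a - b)" for k
    using pow_divdiff_mult[of a b k] False by (simp add: eq_divide_eq mult.commute)
  ultimately show ?thesis
    using False by (simp add: exp_divdiff_def right_diff_distrib)
qed

lemma pow_divdiff_exp_divdiff:
  assumes "n > 0" and a: "exp a ^ n = exp a ^ r" and b: "exp b ^ n = exp b ^ r"
  shows "pow_divdiff (exp a) (exp b) n * exp_divdiff a b
    = exp_divdiff (of_nat r * a) (of_nat r * b) * (if a = b then of_nat n else of_nat r)"
proof (cases "a = b")
  case True
  obtain m where m: "n = Suc m" using \<open>n > 0\<close> by (cases n) auto
  have "pow_divdiff (exp a) (exp b) n * exp_divdiff a b = of_nat n * exp a ^ n"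
    using True by (simp add: m exp_divdiff_def pow_divdiff_same del: pow_divdiff.simps)
  also have "\<dots> = exp (of_nat r * a) * of_nat n"
    by (metis a exp_of_nat_mult mult.commute)
  also have "\<dots> = exp_divdiff (of_nat r * a) (of_nat r * b) * (if a = b then of_nat n else of_nat r)"
    using True by (simp add: exp_divdiff_def)
  finally show ?thesis .
next
  case False
  have "pow_divdiff (exp a) (exp b) n * exp_divdiff a b = (exp a ^ r - exp b ^ r) / (a - b)"
    using False pow_divdiff_mult[of "exp a" "exp b" n] by (simp add: exp_divdiff_def a b mult.commute)
  moreover have "exp_divdiff (of_nat r * a) (of_nat r * b) * of_nat r = (exp a ^ r - exp b ^ r) / (a - b)"
    if "r > 0"
  proof -
    have "exp_divdiff (of_nat r * a) (of_nat r * b) = (exp a ^ r - exp b ^ r) / (of_nat r * (a - b))"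
      using that False by (simp add: exp_divdiff_def exp_of_nat_mult right_diff_distrib)
    then show ?thesis using that False by (simp add: field_simps)
  qed
  ultimately show ?thesis
    using False by (cases "r = 0") auto
qed

section \<open>Functional calculus of a spectral resolution\<close>

locale spectral_resolution =
  fixes E :: "complex set" and P :: "complex \<Rightarrow> 'm::finite cmat"
  assumes finite_E: "finite E"
    and proj_mult: "\<And>a b. a \<in> E \<Longrightarrow> b \<in> E \<Longrightarrow> P a ** P b = (if a = b then P a else 0)"
    and sum_proj: "(\<Sum>a\<in>E. P a) = mat 1"
begin

text \<open>\<open>spectral f\<close> is \<open>f(A)\<close> for \<open>A = spectral (\<lambda>a. a)\<close>.\<close>

definition spectral :: "(complex \<Rightarrow> complex) \<Rightarrow> 'm cmat" where
  "spectral f = (\<Sum>a\<in>E. csmult (f a) (P a))"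

lemma spectral_1: "spectral (\<lambda>_. 1) = mat 1"
  by (simp add: spectral_def sum_proj)

lemma csmult_spectral: "csmult c (spectral f) = spectral (\<lambda>a. c * f a)"
  by (simp add: spectral_def csmult_sum_right csmult_csmult)

lemma proj_mult_spectral:
  assumes "j \<in> E"
  shows "P j ** spectral f = csmult (f j) (P j)"
proof -
  have "P j ** spectral f = (\<Sum>a\<in>E. if a = j then csmult (f j) (P j) else 0)"
    using assms by (auto simp: spectral_def matrix_sum_right csmult_mult_right proj_mult intro!: sum.cong)
  then show ?thesis using assms finite_E by simp
qed

lemma spectral_mult_proj:
  assumes "j \<in> E"
  shows "spectral f ** P j = csmult (f j) (P j)"
proof -
  have "spectral f ** P j = (\<Sum>a\<in>E. if a = j then csmult (f j) (P j) else 0)"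
    using assms by (auto simp: spectral_def matrix_sum_left csmult_mult_left proj_mult intro!: sum.cong)
  then show ?thesis using assms finite_E by simp
qed

lemma block_spectral:
  "j \<in> E \<Longrightarrow> l \<in> E \<Longrightarrow> P j ** spectral f ** P l = (if j = l then csmult (f j) (P j) else 0)"
  by (simp add: proj_mult_spectral csmult_mult_left proj_mult)

lemma sum_blocks: "Y = (\<Sum>j\<in>E. \<Sum>l\<in>E. P j ** Y ** P l)"
proof -
  have "Y = (\<Sum>j\<in>E. P j) ** Y ** (\<Sum>l\<in>E. P l)" by (simp add: sum_proj)
  also have "\<dots> = (\<Sum>j\<in>E. \<Sum>l\<in>E. P j ** Y ** P l)"
    by (simp add: matrix_sum_left matrix_sum_right) (rule sum.swap)
  finally show ?thesis .
qed

lemma blocks_eqI: "(\<And>j l. j \<in> E \<Longrightarrow> l \<in> E \<Longrightarrow> P j ** X ** P l = P j ** Y ** P l) \<Longrightarrow> X = Y"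
  by (subst (1 2) sum_blocks) (auto intro!: sum.cong)

lemma spectral_eqD:
  assumes "spectral f = spectral g" "a \<in> E" "P a \<noteq> 0"
  shows "f a = g a"
proof -
  have "csmult (f a - g a) (P a) = 0"
    using block_spectral[of a a f] block_spectral[of a a g] assms by (simp add: csmult_diff_left)
  then have "cmod (f a - g a) * norm (P a) = 0" by (metis norm_csmult norm_zero)
  then show ?thesis using assms(3) by simp
qed

lemma mpow_spectral: "mpow (spectral f) k = spectral (\<lambda>a. f a ^ k)"
proof (induction k)
  case (Suc k)
  have "spectral f ** spectral (\<lambda>a. f a ^ k) = (\<Sum>a\<in>E. csmult (f a ^ k) (spectral f ** P a))"
    by (simp add: spectral_def[of "\<lambda>a. f a ^ k"] matrix_sum_right csmult_mult_right)
  also have "\<dots> = (\<Sum>a\<in>E. csmult (f a ^ Suc k) (P a))"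
    by (intro sum.cong) (simp_all add: spectral_mult_proj csmult_csmult mult.commute)
  also have "\<dots> = spectral (\<lambda>a. f a ^ Suc k)"
    by (simp add: spectral_def)
  finally show ?case by (simp add: Suc)
qed (simp add: spectral_1)

lemma mexp_spectral: "mexp (spectral f) = spectral (\<lambda>a. exp (f a))"
proof -
  have "(\<lambda>k. \<Sum>a\<in>E. csmult (of_real (1 / fact k) * f a ^ k) (P a)) sums spectral (\<lambda>a. exp (f a))"
    unfolding spectral_def by (intro sums_sum bounded_linear.sums[OF bounded_linear_csmult_left] exp_sums_complex)
  moreover have "(\<Sum>a\<in>E. csmult (of_real (1 / fact k) * f a ^ k) (P a)) = (1 / fact k) *\<^sub>R mpow (spectral f) k" for k
    by (simp only: mpow_spectral) (simp add: spectral_def scaleR_sum_right scaleR_csmult)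
  ultimately have "(\<lambda>k. (1 / fact k) *\<^sub>R mpow (spectral f) k) sums spectral (\<lambda>a. exp (f a))"
    by simp
  then show ?thesis by (rule sums_unique2[OF mexp_sums])
qed

lemma block_mpow_deriv:
  assumes "j \<in> E" "l \<in> E"
  shows "P j ** mpow_deriv (spectral f) Y k ** P l = csmult (pow_divdiff (f j) (f l) k) (P j ** Y ** P l)"
proof (induction k)
  case (Suc k)
  have "P j ** mpow_deriv (spectral f) Y (Suc k) ** P l
      = (P j ** spectral f) ** mpow_deriv (spectral f) Y k ** P l + P j ** Y ** (mpow (spectral f) k ** P l)"
    by (simp add: matrix_add_ldistrib matrix_add_rdistrib matrix_mul_assoc)
  also have "\<dots> = csmult (f j) (P j ** mpow_deriv (spectral f) Y k ** P l) + csmult (f l ^ k) (P j ** Y ** P l)"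
    using assms by (simp add: proj_mult_spectral mpow_spectral spectral_mult_proj csmult_mult_left
        csmult_mult_right matrix_mul_assoc)
  finally show ?case by (simp add: Suc csmult_csmult csmult_add_left)
qed simp

lemma block_mexp_deriv:
  assumes "j \<in> E" "l \<in> E"
  shows "P j ** mexp_deriv (spectral f) Y ** P l = csmult (exp_divdiff (f j) (f l)) (P j ** Y ** P l)"
proof -
  have "(\<lambda>k. P j ** ((1 / fact k) *\<^sub>R mpow_deriv (spectral f) Y k) ** P l)
      sums (P j ** mexp_deriv (spectral f) Y ** P l)"
    by (rule bounded_linear.sums[OF bounded_linear_sandwich mexp_deriv_sums])
  moreover have "P j ** ((1 / fact k) *\<^sub>R mpow_deriv (spectral f) Y k) ** P l
      = csmult (of_real (1 / fact k) * pow_divdiff (f j) (f l) k) (P j ** Y ** P l)" for k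
    using assms by (simp add: sandwich_scaleR block_mpow_deriv scaleR_csmult)
  moreover have "(\<lambda>k. csmult (of_real (1 / fact k) * pow_divdiff (f j) (f l) k) (P j ** Y ** P l))
      sums csmult (exp_divdiff (f j) (f l)) (P j ** Y ** P l)"
    by (rule bounded_linear.sums[OF bounded_linear_csmult_left pow_divdiff_sums])
  ultimately show ?thesis by (simp add: sums_iff)
qed

lemma block_ssp:
  assumes "j \<in> E" "l \<in> E"
  shows "P j ** ssp E P B ** P l = (if j = l then P j ** B ** P l else 0)"
proof -
  have "P j ** ssp E P B ** P l = (\<Sum>a\<in>E. (P j ** P a) ** B ** (P a ** P l))"
    by (simp add: ssp_def matrix_sum_left matrix_sum_right matrix_mul_assoc)
  also have "\<dots> = (\<Sum>a\<in>E. if a = j then (if j = l then P j ** B ** P l else 0) else 0)"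
    using assms by (intro sum.cong) (auto simp: proj_mult)
  finally show ?thesis using assms finite_E by simp
qed

lemma block_sspc:
  assumes "j \<in> E" "l \<in> E"
  shows "P j ** sspc E P B ** P l = (if j = l then 0 else P j ** B ** P l)"
proof -
  let ?S = "{(j, l). j \<in> E \<and> l \<in> E \<and> j \<noteq> l}"
  have "finite ?S" by (rule finite_subset[of _ "E \<times> E"]) (auto simp: finite_E)
  have "P j ** sspc E P B ** P l = (\<Sum>x\<in>?S. (P j ** P (fst x)) ** B ** (P (snd x) ** P l))"
    by (simp add: sspc_def matrix_sum_left matrix_sum_right matrix_mul_assoc case_prod_beta)
  also have "\<dots> = (\<Sum>x\<in>?S. if x = (j, l) then P j ** B ** P l else 0)"
    using assms by (intro sum.cong) (auto simp: proj_mult split: if_splits)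
  finally show ?thesis using assms \<open>finite ?S\<close> by simp
qed

lemma bigo_ssp: "bigo_norm_pow (ssp E P) 1"
proof -
  have "norm (ssp E P B) \<le> (\<Sum>a\<in>E. norm (P a) * norm (P a)) * norm B" for B
    unfolding ssp_def sum_distrib_right by (rule order_trans[OF norm_sum sum_mono[OF norm_sandwich_le]])
  then show ?thesis by (intro bigo_norm_pow_le[OF bigo_norm_pow_id] always_eventually allI)
qed

lemma bigo_sspc: "bigo_norm_pow (sspc E P) 1"
proof -
  have "norm (sspc E P B) \<le> (\<Sum>(j, l)\<in>{(j, l). j \<in> E \<and> l \<in> E \<and> j \<noteq> l}. norm (P j) * norm (P l)) * norm B" for B
    unfolding sspc_def sum_distrib_right
    by (rule order_trans[OF norm_sum sum_mono]) (auto simp: norm_sandwich_le)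
  then show ?thesis by (intro bigo_norm_pow_le[OF bigo_norm_pow_id] always_eventually allI)
qed

lemma mpow_mexp_periodic:
  assumes "\<And>a. a \<in> E \<Longrightarrow> exp a ^ n = exp a ^ r"
  shows "mpow (mexp (spectral (\<lambda>a. a))) n = mexp (csmult (of_nat r) (spectral (\<lambda>a. a)))"
proof -
  have "spectral (\<lambda>a. exp a ^ n) = spectral (\<lambda>a. exp (of_nat r * a))"
    unfolding spectral_def by (intro sum.cong) (simp_all add: assms exp_of_nat_mult)
  then show ?thesis by (simp add: mexp_spectral mpow_spectral csmult_spectral)
qed

text \<open>Both sides act on the block \<open>P j ** B ** P l\<close> by a scalar: the left one by the product of
  divided differences of \<open>z \<mapsto> z^n\<close> and of \<open>exp\<close>, the right one by a single divided difference
  of \<open>exp\<close>; these agree by \<open>pow_divdiff_exp_divdiff\<close>.\<close>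

lemma mpow_deriv_mexp_deriv_periodic:
  assumes "n > 0" and periodic: "\<And>a. a \<in> E \<Longrightarrow> exp a ^ n = exp a ^ r"
  shows "mpow_deriv (mexp (spectral (\<lambda>a. a))) (mexp_deriv (spectral (\<lambda>a. a)) B) n
    = mexp_deriv (csmult (of_nat r) (spectral (\<lambda>a. a)))
        (csmult (of_nat r) (sspc E P B) + csmult (of_nat n) (ssp E P B))"
proof (rule blocks_eqI)
  fix j l assume jl: "j \<in> E" "l \<in> E"
  have "P j ** mpow_deriv (mexp (spectral (\<lambda>a. a))) (mexp_deriv (spectral (\<lambda>a. a)) B) n ** P l
      = csmult (pow_divdiff (exp j) (exp l) n * exp_divdiff j l) (P j ** B ** P l)"
    using jl by (simp add: mexp_spectral block_mpow_deriv block_mexp_deriv csmult_csmult)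
  also have "\<dots> = csmult (exp_divdiff (of_nat r * j) (of_nat r * l) * (if j = l then of_nat n else of_nat r))
      (P j ** B ** P l)"
    using pow_divdiff_exp_divdiff[OF \<open>n > 0\<close> periodic[OF jl(1)] periodic[OF jl(2)]] by simp
  also have "\<dots> = P j ** mexp_deriv (csmult (of_nat r) (spectral (\<lambda>a. a)))
      (csmult (of_nat r) (sspc E P B) + csmult (of_nat n) (ssp E P B)) ** P l"
    using jl by (cases "j = l") (simp_all add: csmult_spectral block_mexp_deriv block_ssp block_sspc
        matrix_add_ldistrib matrix_add_rdistrib csmult_mult_left csmult_mult_right csmult_csmult)
  finally show "P j ** mpow_deriv (mexp (spectral (\<lambda>a. a))) (mexp_deriv (spectral (\<lambda>a. a)) B) n ** P l
      = P j ** mexp_deriv (csmult (of_nat r) (spectral (\<lambda>a. a)))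
          (csmult (of_nat r) (sspc E P B) + csmult (of_nat n) (ssp E P B)) ** P l" .
qed

end

theorem theorem3:
  fixes A :: "complex^'m^'m" and E :: "complex set" and P :: "complex \<Rightarrow> complex^'m^'m"
    and k n :: nat
  assumes finE: "finite E"
    and decomp: "A = (\<Sum>a\<in>E. csmult a (P a))"
    and proj: "\<And>a b. a \<in> E \<Longrightarrow> b \<in> E \<Longrightarrow> P a ** P b = (if a = b then P a else 0)"
    and nonzero: "\<And>a. a \<in> E \<Longrightarrow> P a \<noteq> 0"
    and resol: "(\<Sum>a\<in>E. P a) = mat 1"
    and kpos: "k > 0"
    and kper: "mpow (mexp A) k = mat 1"
    and kmin: "\<And>j. 0 < j \<Longrightarrow> j < k \<Longrightarrow> mpow (mexp A) j \<noteq> mat 1"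
    and npos: "n > 0"
  shows "\<exists>c \<delta>. c > 0 \<and> \<delta> > 0 \<and>
    (\<forall>B :: complex^'m^'m. norm B \<le> \<delta> \<and> diagonalizable (A + B) \<longrightarrow>
       norm (mpow (mexp (A + B)) n
             - mexp (csmult (of_nat (n mod k)) A + csmult (of_nat (n mod k)) (sspc E P B)
                     + csmult (of_nat n) (ssp E P B)))
         \<le> c * (norm B)\<^sup>2)"
proof -
  interpret spectral_resolution E P
    using finE proj resol by unfold_locales
  define r where "r = n mod k"
  have A: "A = spectral (\<lambda>a. a)"
    using decomp by (simp add: spectral_def)
  have "exp a ^ k = 1" if "a \<in> E" for a
    using spectral_eqD[of "\<lambda>a. exp a ^ k" "\<lambda>_. 1" a] kper that nonzero
    by (simp add: A mexp_spectral mpow_spectral spectral_1)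
  then have periodic: "exp a ^ n = exp a ^ r" if "a \<in> E" for a
    using that by (metis r_def div_mult_mod_eq power_add power_mult power_one mult_1 mult.commute)
  define C where "C B = csmult (of_nat r) (sspc E P B) + csmult (of_nat n) (ssp E P B)" for B
  have "bigo_norm_pow C 1"
    unfolding C_def by (intro bigo_norm_pow_add bigo_csmult bigo_ssp bigo_sspc)
  then have "bigo_norm_pow (\<lambda>B.
      (mpow (mexp (A + B)) n - mpow (mexp A) n - mpow_deriv (mexp A) (mexp_deriv A B) n)
      - (mexp (csmult (of_nat r) A + C B) - mexp (csmult (of_nat r) A) - mexp_deriv (csmult (of_nat r) A) (C B))) 2"
    by (intro bigo_norm_pow_diff bigo_mpow_mexp_remainder bigo_mexp_remainder)
  moreover note mpow_mexp_periodic[OF periodic] mpow_deriv_mexp_deriv_periodic[OF npos periodic]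
  ultimately have "bigo_norm_pow (\<lambda>B. mpow (mexp (A + B)) n - mexp (csmult (of_nat r) A + C B)) 2"
    by (simp add: A C_def)
  from bigo_norm_pow_imp_bound[OF this] show ?thesis
    by (fastforce simp: C_def r_def add.assoc)
qed

end
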